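(* For every $t\in\mathbb Q_{\ge0}\cup\{\infty\}$, the word $\omega_t$ is a reduced word which represents the element $\Omega(t)\in\mathfrak F_3$. (For $t=\frac01,\frac10$ this is the convention $\Omega(\frac01)=\omega_{0/1}=x$, $\Omega(\frac10)=\omega_{1/0}=z$.)
   Context: $\mathfrak F_3$ is the free group on $\{x,y,z\}$. Farey tree $\mathrm{F}\mathbb T$: rooted planar binary tree with root $(\frac01,\frac11,\frac10)$, and each vertex $(\frac ab,\frac cd,\frac ef)$ has left child $(\frac ab,\frac{a+c}{b+d},\frac cd)$ and right child $(\frac cd,\frac{c+e}{d+f},\frac ef)$; $\frac10$ represents $\infty$. Every positive rational $t$ occurs as the middle entry of exactly one vertex. Word tree $\mathrm{W}\mathbb T$: rooted planar binary tree with vertices in $\mathfrak F_3^3$, root $(x,y,z)$, and a vertex $(a,b,c)$ has left child $(a,bcb^{-1},b)$ and right child $(b,b^{-1}ab,c)$. $\Omega(t)$ for positive rational $t$: the middle entry of the vertex of $\mathrm{W}\mathbb T$ at the same position (same sequence of left/right moves from the root) as the unique vertex of $\mathrm{F}\mathbb T$ with middle entry $t$; $\Omega(\frac01)=x$, $\Omega(\frac10)=z$. Modified lattice: the planar graph with vertex set $\mathbb Z^2$ whose edges are the horizontal unit segments, the vertical unit segments, and the diagonal segments of slope $-1$ joining $(i,j+1)$ and $(i+1,j)$. Words $\omega_t$: $\omega_{0/1}=x$, $\omega_{1/0}=z$. For reduced $t=p/q\in(0,\infty)$, let $L_t$ be the segment from $(0,0)$ to $(q,p)$, oriented from $(0,0)$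 to $(q,p)$. List the edges whose relative interior meets $L_t$, in the order of the intersection points along $L_t$. A horizontal (resp. diagonal, vertical) edge contributes $x$ (resp. $y$, $z$) if its midpoint is not on the right-hand side of $L_t$ (including lying on $L_t$), and $x^{-1}$ (resp. $y^{-1}$, $z^{-1}$) if its midpoint is on the right-hand side. $\omega_t$ is the concatenation of these letters. *)

theory Defs
  imports Complex_Main
begin

datatype gen = X | Y | Z

text \<open>A letter is a generator with an exponent flag: True = exponent +1, False = exponent -1.\<close>
type_synonym letter = "gen \<times> bool"
type_synonym word = "letter list"

definition inv_letter :: "letter \<Rightarrow> letter" where
  "inv_letter l = (fst l, \<not> snd l)"

definition inv_word :: "word \<Rightarrow> word" where
  "inv_word w = rev (map inv_letter w)"

definition reduced :: "word \<Rightarrow> bool" where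
  "reduced w \<longleftrightarrow> (\<forall>i. Suc i < length w \<longrightarrow> w ! Suc i \<noteq> inv_letter (w ! i))"

text \<open>Elementary free reduction, and the equivalence it generates: two words
  represent the same element of F_3 iff they are related by fg_equiv.\<close>
definition free_step :: "word \<Rightarrow> word \<Rightarrow> bool" where
  "free_step u v \<longleftrightarrow> (\<exists>p s l. u = p @ [l, inv_letter l] @ s \<and> v = p @ s)"

inductive fg_equiv :: "word \<Rightarrow> word \<Rightarrow> bool" where
  fg_refl: "fg_equiv u u"
| fg_step: "free_step u v \<Longrightarrow> fg_equiv v w \<Longrightarrow> fg_equiv u w"
| fg_step_back: "free_step v u \<Longrightarrow> fg_equiv v w \<Longrightarrow> fg_equiv u w"

abbreviation wx :: word where "wx \<equiv> [(X, True)]"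
abbreviation wy :: word where "wy \<equiv> [(Y, True)]"
abbreviation wz :: word where "wz \<equiv> [(Z, True)]"

datatype qinf = Fin rat | Infty

type_synonym frac = "nat \<times> nat"   \<comment> \<open>(a,b) stands for a/b; (1,0) stands for infinity\<close>

definition farey_root :: "frac \<times> frac \<times> frac" where
  "farey_root = ((0,1), (1,1), (1,0))"

fun farey_child :: "bool \<Rightarrow> frac \<times> frac \<times> frac \<Rightarrow> frac \<times> frac \<times> frac" where
  "farey_child True ((a,b), (c,d), (e,f)) = ((a,b), (a+c, b+d), (c,d))"
| "farey_child False ((a,b), (c,d), (e,f)) = ((c,d), (c+e, d+f), (e,f))"

definition farey_vertex :: "bool list \<Rightarrow> frac \<times> frac \<times> frac" where
  "farey_vertex p = fold farey_child p farey_root"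

definition farey_mid :: "bool list \<Rightarrow> rat" where
  "farey_mid p = (case fst (snd (farey_vertex p)) of (c,d) \<Rightarrow> of_nat c / of_nat d)"

text \<open>Word tree: entries are words (representatives of elements of F_3); products
  are concatenation and inverses are formal inverses.\<close>
definition word_root :: "word \<times> word \<times> word" where
  "word_root = (wx, wy, wz)"

fun word_child :: "bool \<Rightarrow> word \<times> word \<times> word \<Rightarrow> word \<times> word \<times> word" where
  "word_child True (a, b, c) = (a, b @ c @ inv_word b, b)"
| "word_child False (a, b, c) = (b, inv_word b @ a @ b, c)"

definition word_vertex :: "bool list \<Rightarrow> word \<times> word \<times> word" where
  "word_vertex p = fold word_child p word_root"

definition Omega :: "qinf \<Rightarrow> word" where
  "Omega t = (case t of
      Infty \<Rightarrow> wz
    | Fin r \<Rightarrow> (if r = 0 then wx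
               else fst (snd (word_vertex (THE p. farey_mid p = r)))))"

datatype edge = H int int | V int int | D int int

fun edge_ends :: "edge \<Rightarrow> (real \<times> real) \<times> (real \<times> real)" where
  "edge_ends (H i j) = ((of_int i, of_int j), (of_int i + 1, of_int j))"
| "edge_ends (V i j) = ((of_int i, of_int j), (of_int i, of_int j + 1))"
| "edge_ends (D i j) = ((of_int i, of_int j + 1), (of_int i + 1, of_int j))"

fun edge_gen :: "edge \<Rightarrow> gen" where
  "edge_gen (H i j) = X" | "edge_gen (D i j) = Y" | "edge_gen (V i j) = Z"

definition edge_mid :: "edge \<Rightarrow> real \<times> real" where
  "edge_mid e = (case edge_ends e of ((x0,y0),(x1,y1)) \<Rightarrow> ((x0+x1)/2, (y0+y1)/2))"

definition hits :: "nat \<Rightarrow> nat \<Rightarrow> edge \<Rightarrow> real \<Rightarrow> bool" where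
  "hits p q e s \<longleftrightarrow> 0 \<le> s \<and> s \<le> 1 \<and>
     (case edge_ends e of ((x0,y0),(x1,y1)) \<Rightarrow>
        (\<exists>u. 0 < u \<and> u < 1 \<and> s * real q = (1-u)*x0 + u*x1 \<and> s * real p = (1-u)*y0 + u*y1))"

definition crossed_edges :: "nat \<Rightarrow> nat \<Rightarrow> edge set" where
  "crossed_edges p q = {e. \<exists>s. hits p q e s}"

definition right_side :: "nat \<Rightarrow> nat \<Rightarrow> real \<times> real \<Rightarrow> bool" where
  "right_side p q m \<longleftrightarrow> real q * snd m - real p * fst m < 0"

definition edge_letter :: "nat \<Rightarrow> nat \<Rightarrow> edge \<Rightarrow> letter" where
  "edge_letter p q e = (edge_gen e, \<not> right_side p q (edge_mid e))"

definition crossed_list :: "nat \<Rightarrow> nat \<Rightarrow> edge list" where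
  "crossed_list p q = (THE es. distinct es \<and> set es = crossed_edges p q \<and>
      sorted_wrt (\<lambda>e e'. \<forall>s s'. hits p q e s \<longrightarrow> hits p q e' s' \<longrightarrow> s < s') es)"

definition lattice_word :: "nat \<Rightarrow> nat \<Rightarrow> word" where
  "lattice_word p q = map (edge_letter p q) (crossed_list p q)"

text \<open>omega_t, with t = p/q in lowest terms (quotient_of gives coprime p, q > 0).\<close>
definition omega :: "qinf \<Rightarrow> word" where
  "omega t = (case t of
      Infty \<Rightarrow> wz
    | Fin r \<Rightarrow> (if r = 0 then wx
               else lattice_word (nat (fst (quotient_of r))) (nat (snd (quotient_of r)))))"

definition nonneg_qinf :: "qinf \<Rightarrow> bool" where
  "nonneg_qinf t = (case t of Fin r \<Rightarrow> 0 \<le> r | Infty \<Rightarrow> True)"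

end

theory Submission
  imports Defs
begin

text \<open>Let N = p + q. The segment from (0,0) to (q,p) meets the anti-diagonals x + y = k,
  0 < k < N, at the parameters k/N, and between two consecutive ones it crosses exactly one
  horizontal or vertical edge, a vertical one exactly when k q mod N wraps around. This describes
  omega_(p/q) as an explicit cutting word of length 2N - 3 whose letters alternate between a power
  of y and a power of x or z, so it is reduced.

  For Farey neighbours a/b < e/f, i.e. e b - a f = 1, the identity (b + f)(a + b) = b N - 1 with
  N = a + b + e + f expresses the remainders of the mediant through those of a/b and e/f, giving
  omega_((a+e)/(b+f)) = omega_(a/b)^-1 x y z omega_(e/f)^-1. Applying this twice shows that b c b^-1
  and b^-1 a b represent the omega of the left and right child, so by induction down the Farey
  tree every vertex of the word tree represents the omega of the corresponding Farey fractions.\<close>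

section \<open>Free reduction\<close>

lemma inv_inv_letter [simp]: "inv_letter (inv_letter l) = l"
  unfolding inv_letter_def by simp

lemma inv_word_append [simp]: "inv_word (u @ v) = inv_word v @ inv_word u"
  unfolding inv_word_def by simp

lemma inv_inv_word [simp]: "inv_word (inv_word u) = u"
  unfolding inv_word_def by (simp add: rev_map comp_def)

lemma inv_word_Cons: "inv_word (l # w) = inv_word w @ [inv_letter l]"
  unfolding inv_word_def by simp

lemma length_inv_word [simp]: "length (inv_word w) = length w"
  unfolding inv_word_def by simp

lemma nth_inv_word: "i < length w \<Longrightarrow> inv_word w ! i = inv_letter (w ! (length w - 1 - i))"
  unfolding inv_word_def by (simp add: rev_nth)

lemma reduced_singleton: "reduced [l]"
  unfolding reduced_def by simp

lemma fg_equiv_trans [trans]: "fg_equiv u v \<Longrightarrow> fg_equiv v w \<Longrightarrow> fg_equiv u w"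
  by (induction u v rule: fg_equiv.induct) (auto intro: fg_equiv.intros)

lemma fg_equiv_sym: "fg_equiv u v \<Longrightarrow> fg_equiv v u"
proof (induction u v rule: fg_equiv.induct)
  case (fg_refl u)
  then show ?case by (rule fg_equiv.fg_refl)
next
  case (fg_step u v w)
  then show ?case by (meson fg_equiv.intros fg_equiv_trans)
next
  case (fg_step_back v u w)
  then show ?case by (meson fg_equiv.intros fg_equiv_trans)
qed

lemma free_step_context: "free_step u v \<Longrightarrow> free_step (p @ u @ s) (p @ v @ s)"
  unfolding free_step_def by (metis append.assoc)

lemma fg_equiv_context: "fg_equiv u v \<Longrightarrow> fg_equiv (p @ u @ s) (p @ v @ s)"
  by (induction u v rule: fg_equiv.induct) (auto intro: fg_equiv.intros free_step_context)

lemma fg_equiv_append: "fg_equiv u u' \<Longrightarrow> fg_equiv v v' \<Longrightarrow> fg_equiv (u @ v) (u' @ v')"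
  using fg_equiv_context[of u u' "[]" v] fg_equiv_context[of v v' u' "[]"] fg_equiv_trans by simp

lemma free_step_inv_word: "free_step u v \<Longrightarrow> free_step (inv_word u) (inv_word v)"
  unfolding free_step_def by (force simp: inv_word_Cons inv_word_def)

lemma fg_equiv_inv_word: "fg_equiv u v \<Longrightarrow> fg_equiv (inv_word u) (inv_word v)"
  by (induction u v rule: fg_equiv.induct) (auto intro: fg_equiv.intros free_step_inv_word)

lemma fg_equiv_cancel: "fg_equiv (w @ inv_word w) []"
proof (induction w)
  case Nil
  then show ?case by (simp add: inv_word_def fg_equiv.fg_refl)
next
  case (Cons l w)
  have "fg_equiv ([l] @ (w @ inv_word w) @ [inv_letter l]) ([l] @ [] @ [inv_letter l])"
    by (rule fg_equiv_context[OF Cons])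
  moreover have "free_step [l, inv_letter l] []"
    unfolding free_step_def by (rule exI[of _ "[]"]) auto
  ultimately show ?case
    by (simp add: inv_word_Cons) (meson fg_equiv.intros fg_equiv_trans)
qed

lemma fg_equiv_cancel': "fg_equiv (inv_word w @ w) []"
  using fg_equiv_cancel[of "inv_word w"] by simp

section \<open>Cutting words\<close>

lemma div_mod_unique_int:
  fixes N :: int
  assumes "0 \<le> r" "r < N" "x = c * N + r"
  shows "x div N = c \<and> x mod N = r"
  using assms by simp

lemma coprime_of_det_eq_1:
  fixes a b e f :: int
  assumes "e * b - a * f = 1"
  shows "coprime a b" "coprime e f"
  by (rule coprimeI; metis assms dvd_diff dvd_mult dvd_mult2)+

lemma half_index_bounds:
  "m < nat (2 * n - 3) \<Longrightarrow> 1 \<le> int (m div 2) + 1 \<and> int (m div 2) + 1 < n"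
  by linarith

lemma half_index_bound_odd:
  "m < nat (2 * n - 3) \<Longrightarrow> odd m \<Longrightarrow> int (m div 2) + 1 + 1 < n"
  using odd_two_times_div_two_succ[of m] by linarith

lemma half_index_bound_Suc_even:
  "Suc m < nat (2 * n - 3) \<Longrightarrow> even m \<Longrightarrow> int (m div 2) + 1 + 1 < n"
  using even_two_times_div_two[of m] by linarith

lemma half_index_reverse_even:
  assumes "m < nat (2 * n - 3)" "even m"
  shows "even (nat (2 * n - 3) - 1 - m) \<and> int ((nat (2 * n - 3) - 1 - m) div 2) + 1 = n - (int (m div 2) + 1)"
proof -
  obtain j where "m = 2 * j" using assms(2) by (elim evenE)
  moreover have "nat (2 * n - 3) - 1 - 2 * j = 2 * (nat (n - 2) - j)" if "m = 2 * j"
    using assms(1) that by linarith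
  ultimately show ?thesis using assms(1) by auto
qed

lemma half_index_reverse_odd:
  assumes "m < nat (2 * n - 3)" "odd m"
  shows "odd (nat (2 * n - 3) - 1 - m) \<and> int ((nat (2 * n - 3) - 1 - m) div 2) + 1 = n - 1 - (int (m div 2) + 1)"
proof -
  obtain j where "m = 2 * j + 1" using assms(2) by (elim oddE)
  moreover have "nat (2 * n - 3) - 1 - (2 * j + 1) = 2 * (nat (n - 3) - j) + 1" if "m = 2 * j + 1"
    using assms(1) that by linarith
  ultimately show ?thesis using assms(1) by auto
qed

lemma nat_two_mult_minus_three: "nat (2 * x - 3) = 2 * nat x - 3"
  by linarith

definition diag_rem :: "int \<Rightarrow> int \<Rightarrow> int \<Rightarrow> int" where
  "diag_rem P Q k = (k * Q) mod (P + Q)"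

definition diag_quot :: "int \<Rightarrow> int \<Rightarrow> int \<Rightarrow> int" where
  "diag_quot P Q k = (k * Q) div (P + Q)"

text \<open>The segment from (0,0) to (Q,P) meets the anti-diagonal x + y = k at
  x = k Q/(P + Q) = diag_quot P Q k + diag_rem P Q k/(P + Q). Letter 2(k-1) of the cutting word
  comes from the diagonal edge crossed there, letter 2k-1 from the single horizontal edge, or
  vertical edge when diag_rem wraps around, crossed between the anti-diagonals k and k + 1.
  The exponent is +1 iff the midpoint of the edge is not right of the segment.\<close>
definition cut_letter :: "int \<Rightarrow> int \<Rightarrow> nat \<Rightarrow> letter" where
  "cut_letter P Q m = (let k = int (m div 2) + 1 in
     if even m then (Y, P + Q \<le> 2 * diag_rem P Q k)
     else ((if diag_rem P Q (k + 1) < diag_rem P Q k then Z else X),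
           P + Q \<le> diag_rem P Q k + diag_rem P Q (k + 1)))"

definition cut_word :: "int \<Rightarrow> int \<Rightarrow> word" where
  "cut_word P Q = map (cut_letter P Q) [0..<nat (2 * (P + Q) - 3)]"

lemma length_cut_word: "length (cut_word P Q) = nat (2 * (P + Q) - 3)"
  unfolding cut_word_def by simp

lemma nth_cut_word: "m < length (cut_word P Q) \<Longrightarrow> cut_word P Q ! m = cut_letter P Q m"
  unfolding cut_word_def by simp

lemma reduced_cut_word: "reduced (cut_word P Q)"
  unfolding reduced_def
proof (intro allI impI)
  fix i
  assume "Suc i < length (cut_word P Q)"
  moreover have "fst (cut_letter P Q (Suc i)) \<noteq> fst (cut_letter P Q i)"
    unfolding cut_letter_def Let_def by auto
  ultimately show "cut_word P Q ! Suc i \<noteq> inv_letter (cut_word P Q ! i)"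
    by (auto simp: nth_cut_word inv_letter_def)
qed

locale coprime_pos =
  fixes P Q :: int
  assumes P_pos: "P > 0" and Q_pos: "Q > 0" and coprime_P_Q: "coprime P Q"
begin

abbreviation N :: int where "N \<equiv> P + Q"

lemma diag_quot_rem: "k * Q = diag_quot P Q k * N + diag_rem P Q k" "0 \<le> diag_rem P Q k" "diag_rem P Q k < N"
  unfolding diag_rem_def diag_quot_def using P_pos Q_pos by (auto simp: div_mult_mod_eq)

lemma diag_rem_pos:
  assumes "0 < k" "k < N"
  shows "0 < diag_rem P Q k"
proof -
  have "gcd Q N = gcd Q P"
    by (metis add.commute gcd_add2)
  then have "coprime Q N"
    using coprime_P_Q by (simp add: coprime_iff_gcd_eq_1 gcd.commute)
  then have "\<not> N dvd k * Q"
    using assms by (metis coprime_commute coprime_dvd_mult_left_iff zdvd_not_zless)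
  then show ?thesis
    using diag_quot_rem(2)[of k] unfolding diag_rem_def by (auto simp: order_le_less)
qed

lemma diag_rem_Suc:
  assumes "1 \<le> k" "k + 1 < N"
  shows "(diag_rem P Q k + Q < N \<and> diag_rem P Q (k + 1) = diag_rem P Q k + Q \<and> diag_quot P Q (k + 1) = diag_quot P Q k) \<or>
         (diag_rem P Q k + Q > N \<and> diag_rem P Q (k + 1) = diag_rem P Q k + Q - N \<and> diag_quot P Q (k + 1) = diag_quot P Q k + 1)"
proof -
  let ?r = "diag_rem P Q k" and ?i = "diag_quot P Q k"
  have eq: "(k + 1) * Q = ?i * N + (?r + Q)"
    using diag_quot_rem(1)[of k] by (simp add: algebra_simps)
  have eq': "(k + 1) * Q = (?i + 1) * N + (?r + Q - N)"
    using eq by (simp add: algebra_simps)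
  have "diag_rem P Q (k + 1) \<noteq> 0"
    using diag_rem_pos assms by (metis add_pos_pos less_irrefl zero_less_one order_less_le_trans)
  moreover have "?r + Q = N \<Longrightarrow> diag_rem P Q (k + 1) = 0"
    using eq unfolding diag_rem_def by simp
  moreover have "?r + Q < N \<Longrightarrow> (k + 1) * Q div N = ?i \<and> (k + 1) * Q mod N = ?r + Q"
    using div_mod_unique_int[OF _ _ eq] diag_quot_rem(2)[of k] Q_pos by auto
  moreover have "?r + Q > N \<Longrightarrow> (k + 1) * Q div N = ?i + 1 \<and> (k + 1) * Q mod N = ?r + Q - N"
    using div_mod_unique_int[OF _ _ eq'] diag_quot_rem(3)[of k] P_pos by auto
  ultimately show ?thesis
    unfolding diag_rem_def diag_quot_def by (meson linorder_neqE)
qed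

lemma diag_rem_Suc_neq: "1 \<le> k \<Longrightarrow> k + 1 < N \<Longrightarrow> diag_rem P Q (k + 1) \<noteq> diag_rem P Q k"
  using diag_rem_Suc P_pos Q_pos by fastforce

lemma diag_rem_reflect:
  assumes "1 \<le> k" "k < N"
  shows "diag_rem P Q (N - k) = N - diag_rem P Q k"
proof -
  have eq: "(N - k) * Q = (Q - diag_quot P Q k - 1) * N + (N - diag_rem P Q k)"
    using diag_quot_rem(1)[of k] by (simp add: algebra_simps)
  have "0 < diag_rem P Q k" "diag_rem P Q k < N"
    using diag_rem_pos diag_quot_rem(3) assms by auto
  then show ?thesis
    using div_mod_unique_int[OF _ _ eq] unfolding diag_rem_def by auto
qed

text \<open>Reading the segment backwards reverses and inverts the cutting word, except that the
  tie-breaking rule for midpoints on the segment changes from non-strict to strict.\<close>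
lemma inv_cut_letter_reverse:
  assumes m: "m < nat (2 * N - 3)"
  shows "inv_letter (cut_letter P Q (nat (2 * N - 3) - 1 - m)) = (let k = int (m div 2) + 1 in
     if even m then (Y, N < 2 * diag_rem P Q k)
     else ((if diag_rem P Q (k + 1) < diag_rem P Q k then Z else X),
           N < diag_rem P Q k + diag_rem P Q (k + 1)))"
proof -
  let ?k = "int (m div 2) + 1" and ?m' = "nat (2 * N - 3) - 1 - m"
  have k: "1 \<le> ?k" "?k < N" using half_index_bounds[OF m] by auto
  show ?thesis
  proof (cases "even m")
    case True
    have m': "even ?m'" "int (?m' div 2) + 1 = N - ?k" using half_index_reverse_even[OF m True] by auto
    have "cut_letter P Q ?m' = (Y, N \<le> 2 * diag_rem P Q (N - ?k))"
      unfolding cut_letter_def Let_def m'(2) using m'(1) by simp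
    then show ?thesis
      using True diag_rem_reflect[OF k] by (auto simp: inv_letter_def)
  next
    case False
    have k2: "?k + 1 < N" using half_index_bound_odd[OF m False] by simp
    have m': "odd ?m'" "int (?m' div 2) + 1 = N - 1 - ?k" using half_index_reverse_odd[OF m False] by auto
    have "diag_rem P Q (N - 1 - ?k) = N - diag_rem P Q (?k + 1)"
      "diag_rem P Q (N - 1 - ?k + 1) = N - diag_rem P Q ?k"
      using diag_rem_reflect[of "?k + 1"] diag_rem_reflect[of ?k] k k2 by (simp_all add: algebra_simps)
    moreover have "cut_letter P Q ?m' =
        ((if diag_rem P Q (N - 1 - ?k + 1) < diag_rem P Q (N - 1 - ?k) then Z else X),
         N \<le> diag_rem P Q (N - 1 - ?k) + diag_rem P Q (N - 1 - ?k + 1))"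
      unfolding cut_letter_def Let_def m'(2) using m'(1) by simp
    ultimately show ?thesis
      using False by (auto simp: inv_letter_def)
  qed
qed

end

section \<open>Edges of the modified lattice crossed by the segment\<close>

lemma hits_H:
  assumes "p > 0" "q > 0"
  shows "hits p q (H i j) s \<longleftrightarrow> s = of_int j / real p \<and> 0 \<le> j \<and> j \<le> int p \<and>
     i * int p < j * int q \<and> j * int q < (i + 1) * int p"
proof -
  have "hits p q (H i j) s \<longleftrightarrow>
      s = of_int j / real p \<and> 0 \<le> s \<and> s \<le> 1 \<and> of_int i < s * real q \<and> s * real q < of_int i + 1"
    unfolding hits_def using assms by (auto simp: field_simps intro!: exI[of _ "s * real q - of_int i"])
  also have "\<dots> \<longleftrightarrow> s = of_int j / real p \<and> 0 \<le> of_int j / real p \<and> of_int j / real p \<le> 1 \<and>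
      of_int i < of_int j / real p * real q \<and> of_int j / real p * real q < of_int i + 1"
    by auto
  also have "\<dots> \<longleftrightarrow> s = of_int j / real p \<and> of_int 0 \<le> real_of_int j \<and> real_of_int j \<le> of_int (int p) \<and>
      real_of_int (i * int p) < of_int (j * int q) \<and> real_of_int (j * int q) < of_int ((i + 1) * int p)"
    using assms by (simp add: field_simps)
  finally show ?thesis
    by (simp only: of_int_less_iff of_int_le_iff)
qed

lemma hits_V_eq_hits_H: "hits p q (V i j) s = hits q p (H j i) s"
  unfolding hits_def by (auto simp: algebra_simps)

lemma hits_V:
  assumes "p > 0" "q > 0"
  shows "hits p q (V i j) s \<longleftrightarrow> s = of_int i / real q \<and> 0 \<le> i \<and> i \<le> int q \<and>
     j * int q < i * int p \<and> i * int p < (j + 1) * int q"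
  unfolding hits_V_eq_hits_H hits_H[OF assms(2,1)] by auto

text \<open>A shear of the plane maps the diagonal edges onto horizontal ones.\<close>
lemma hits_D_eq_hits_H: "hits p q (D i j) s = hits (p + q) q (H i (i + j + 1)) s"
  unfolding hits_def by (auto simp: algebra_simps)

lemma hits_D:
  assumes "p > 0" "q > 0"
  shows "hits p q (D i j) s \<longleftrightarrow> s = of_int (i + j + 1) / real (p + q) \<and> 0 \<le> i + j + 1 \<and>
     i + j + 1 \<le> int p + int q \<and> i * (int p + int q) < (i + j + 1) * int q \<and>
     (i + j + 1) * int q < (i + 1) * (int p + int q)"
  unfolding hits_D_eq_hits_H using hits_H[of "p + q" q] assms by simp

lemma not_right_side_half_int:
  "\<not> right_side p q (of_int a / 2, of_int b / 2) \<longleftrightarrow> int p * a \<le> int q * b"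
  unfolding right_side_def by simp (metis not_less of_int_less_iff of_int_mult of_int_of_nat_eq)

lemma not_right_side_mid_D: "\<not> right_side p q (edge_mid (D i j)) \<longleftrightarrow> int p * (2 * i + 1) \<le> int q * (2 * j + 1)"
  using not_right_side_half_int[of p q "2 * i + 1" "2 * j + 1"] by (simp add: edge_mid_def)

lemma not_right_side_mid_H: "\<not> right_side p q (edge_mid (H i j)) \<longleftrightarrow> int p * (2 * i + 1) \<le> int q * (2 * j)"
  using not_right_side_half_int[of p q "2 * i + 1" "2 * j"] by (simp add: edge_mid_def)

lemma not_right_side_mid_V: "\<not> right_side p q (edge_mid (V i j)) \<longleftrightarrow> int p * (2 * i) \<le> int q * (2 * j + 1)"
  using not_right_side_half_int[of p q "2 * i" "2 * j + 1"] by (simp add: edge_mid_def)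

fun hit_param :: "nat \<Rightarrow> nat \<Rightarrow> edge \<Rightarrow> real" where
  "hit_param p q (H i j) = of_int j / real p"
| "hit_param p q (V i j) = of_int i / real q"
| "hit_param p q (D i j) = of_int (i + j + 1) / real (p + q)"

lemma hit_param_unique: "p > 0 \<Longrightarrow> q > 0 \<Longrightarrow> hits p q e s \<Longrightarrow> s = hit_param p q e"
  by (cases e) (auto simp: hits_H hits_V hits_D)

definition diag_edge :: "int \<Rightarrow> int \<Rightarrow> int \<Rightarrow> edge" where
  "diag_edge P Q k = D (diag_quot P Q k) (k - 1 - diag_quot P Q k)"

definition gap_edge :: "int \<Rightarrow> int \<Rightarrow> int \<Rightarrow> edge" where
  "gap_edge P Q k = (if diag_rem P Q (k + 1) < diag_rem P Q k
     then V (diag_quot P Q k + 1) (k - diag_quot P Q k - 1) else H (diag_quot P Q k) (k - diag_quot P Q k))"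

definition cut_edge :: "int \<Rightarrow> int \<Rightarrow> nat \<Rightarrow> edge" where
  "cut_edge P Q m = (let k = int (m div 2) + 1 in if even m then diag_edge P Q k else gap_edge P Q k)"

definition cut_edges :: "int \<Rightarrow> int \<Rightarrow> edge list" where
  "cut_edges P Q = map (cut_edge P Q) [0..<nat (2 * (P + Q) - 3)]"

lemma of_int_divide_less_divide:
  fixes a b c d :: int
  assumes "0 < b" "0 < d" "a * d < c * b"
  shows "(of_int a / of_int b :: real) < of_int c / of_int d"
  using assms by (simp add: field_simps flip: of_int_mult)

lemma not_mult_strictly_between:
  fixes c i p :: int
  assumes "0 < p" "i * p < c * p" "c * p < (i + 1) * p"
  shows False
  using assms by (simp add: mult_less_cancel_right_pos)

lemma cut_edge_diag_edge: "1 \<le> k \<Longrightarrow> cut_edge P Q (nat (2 * k - 2)) = diag_edge P Q k"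
proof -
  assume "1 \<le> k"
  then have "nat (2 * k - 2) = 2 * nat (k - 1)" by linarith
  then show ?thesis using \<open>1 \<le> k\<close> by (simp add: cut_edge_def)
qed

lemma cut_edge_gap_edge: "1 \<le> k \<Longrightarrow> cut_edge P Q (nat (2 * k - 1)) = gap_edge P Q k"
proof -
  assume "1 \<le> k"
  then have "nat (2 * k - 1) = 2 * nat (k - 1) + 1" by linarith
  then show ?thesis using \<open>1 \<le> k\<close> by (simp add: cut_edge_def)
qed

lemma sorted_wrt_key_unique:
  fixes g :: "'a \<Rightarrow> 'b::linorder"
  assumes "inj_on g (set xs)" "set ys = set xs"
    and "sorted_wrt (\<lambda>x y. g x < g y) xs" "sorted_wrt (\<lambda>x y. g x < g y) ys"
  shows "ys = xs"
proof -
  have "map g ys = map g xs"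
    using assms(2-4) by (intro strict_sorted_equal) (auto simp: sorted_wrt_map)
  then show ?thesis
    using assms(1,2) map_inj_on by fastforce
qed

locale lattice_line =
  fixes p q :: nat
  assumes p_pos: "p > 0" and q_pos: "q > 0" and coprime_p_q: "coprime p q"
begin

sublocale coprime_pos "int p" "int q"
  using p_pos q_pos coprime_p_q by unfold_locales auto

lemma hit_param_diag_edge: "hit_param p q (diag_edge (int p) (int q) k) = of_int k / of_int N"
  unfolding diag_edge_def by simp

lemma diag_edge_hits:
  assumes "1 \<le> k" "k < N"
  shows "hits p q (diag_edge (int p) (int q) k) (hit_param p q (diag_edge (int p) (int q) k))"
proof -
  let ?i = "diag_quot (int p) (int q) k" and ?r = "diag_rem (int p) (int q) k"
  have "0 < ?r" "?r < N"
    using diag_rem_pos assms diag_quot_rem(3) by auto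
  then have "?i * N < k * int q" "k * int q < (?i + 1) * N"
    using diag_quot_rem(1)[of k] by (auto simp: algebra_simps)
  then show ?thesis
    unfolding diag_edge_def using assms p_pos q_pos by (simp add: hits_D)
qed

lemma gap_edge_cases:
  assumes "1 \<le> k" "k + 1 < N"
  obtains
    "gap_edge (int p) (int q) k = H (diag_quot (int p) (int q) k) (k - diag_quot (int p) (int q) k)"
    "diag_rem (int p) (int q) k < int p"
    "diag_rem (int p) (int q) (k + 1) = diag_rem (int p) (int q) k + int q"
  | "gap_edge (int p) (int q) k = V (diag_quot (int p) (int q) k + 1) (k - diag_quot (int p) (int q) k - 1)"
    "diag_rem (int p) (int q) k > int p"
    "diag_rem (int p) (int q) (k + 1) = diag_rem (int p) (int q) k + int q - N"
  using diag_rem_Suc[OF assms] p_pos unfolding gap_edge_def by fastforce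

lemma gap_edge_hits:
  assumes "1 \<le> k" "k + 1 < N"
  shows "hits p q (gap_edge (int p) (int q) k) (hit_param p q (gap_edge (int p) (int q) k))"
proof -
  let ?i = "diag_quot (int p) (int q) k" and ?r = "diag_rem (int p) (int q) k"
  have d: "k * int q = ?i * N + ?r" and r: "0 < ?r" "?r < N"
    using diag_quot_rem diag_rem_pos assms by auto
  have i_le_k: "?i \<le> k"
  proof -
    have "k * int q \<le> k * N" using assms p_pos by (intro mult_left_mono) auto
    then have "?i * N \<le> k * N" using d r by linarith
    then show ?thesis using p_pos q_pos by (simp add: mult_le_cancel_right_pos)
  qed
  from assms show ?thesis
  proof (cases rule: gap_edge_cases)
    case 1
    have "k * int p \<le> (N - 2) * int p" using assms by (intro mult_right_mono) auto
    then have "(k - ?i) * N < int p * N"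
      using d 1(2) by (simp add: algebra_simps)
    then have "k - ?i < int p" using p_pos q_pos by (simp add: mult_less_cancel_right_pos)
    moreover have "?i * int p < (k - ?i) * int q" "(k - ?i) * int q < (?i + 1) * int p"
      using d 1(2) r by (auto simp: algebra_simps)
    ultimately show ?thesis unfolding 1(1) using i_le_k p_pos q_pos by (simp add: hits_H)
  next
    case 2
    have "k * int q \<le> (N - 2) * int q" using assms by (intro mult_right_mono) auto
    then have "?i * N < (int q - 1) * N" using d 2(2) by (simp add: algebra_simps)
    then have "?i < int q - 1" using p_pos q_pos by (simp add: mult_less_cancel_right_pos)
    moreover have "0 \<le> ?i"
      using assms q_pos p_pos unfolding diag_quot_def by (simp add: pos_imp_zdiv_nonneg_iff)
    moreover have "(k - ?i - 1) * int q < (?i + 1) * int p" "(?i + 1) * int p < (k - ?i - 1 + 1) * int q"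
      using d 2(2) r by (auto simp: algebra_simps)
    ultimately show ?thesis unfolding 2(1) using p_pos q_pos by (simp add: hits_V)
  qed
qed

lemma hit_param_gap_edge:
  assumes "1 \<le> k" "k + 1 < N"
  shows "of_int k / of_int N < hit_param p q (gap_edge (int p) (int q) k)"
    and "hit_param p q (gap_edge (int p) (int q) k) < of_int (k + 1) / of_int N"
proof -
  let ?i = "diag_quot (int p) (int q) k" and ?r = "diag_rem (int p) (int q) k"
  have d: "k * int q = ?i * N + ?r" and r: "0 < ?r" "?r < N" and N: "N > 0"
    using diag_quot_rem diag_rem_pos assms p_pos by auto
  have pq: "int p > 0" "int q > 0" using p_pos q_pos by auto
  have "of_int k / of_int N < hit_param p q (gap_edge (int p) (int q) k) \<and>
        hit_param p q (gap_edge (int p) (int q) k) < of_int (k + 1) / of_int N"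
    using assms
  proof (cases rule: gap_edge_cases)
    case 1
    have "k * int p < (k - ?i) * N" "(k - ?i) * N < (k + 1) * int p"
      using d r 1(2) by (auto simp: algebra_simps)
    then have "of_int k / of_int N < real_of_int (k - ?i) / of_int (int p)"
      "real_of_int (k - ?i) / of_int (int p) < of_int (k + 1) / of_int N"
      using of_int_divide_less_divide[OF N pq(1), of k "k - ?i"]
        of_int_divide_less_divide[OF pq(1) N, of "k - ?i" "k + 1"]
      by auto
    then show ?thesis
      unfolding 1(1) by (simp only: hit_param.simps of_int_of_nat_eq)
  next
    case 2
    have "k * int q < (?i + 1) * N" "(?i + 1) * N < (k + 1) * int q"
      using d r 2(2) by (auto simp: algebra_simps)
    then have "of_int k / of_int N < real_of_int (?i + 1) / of_int (int q)"
      "real_of_int (?i + 1) / of_int (int q) < of_int (k + 1) / of_int N"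
      using of_int_divide_less_divide[OF N pq(2), of k "?i + 1"]
        of_int_divide_less_divide[OF pq(2) N, of "?i + 1" "k + 1"]
      by auto
    then show ?thesis
      unfolding 2(1) by (simp only: hit_param.simps of_int_of_nat_eq)
  qed
  then show "of_int k / of_int N < hit_param p q (gap_edge (int p) (int q) k)"
    and "hit_param p q (gap_edge (int p) (int q) k) < of_int (k + 1) / of_int N" by auto
qed

lemma diag_quot_eqI: "i * N \<le> k * int q \<Longrightarrow> k * int q < (i + 1) * N \<Longrightarrow> diag_quot (int p) (int q) k = i"
  using div_mod_unique_int[of "k * int q - i * N" N "k * int q" i] unfolding diag_quot_def
  by (simp add: algebra_simps)

lemma diag_edge_of_hits:
  assumes "hits p q (D i j) s"
  shows "\<exists>k. 1 \<le> k \<and> k < N \<and> diag_edge (int p) (int q) k = D i j"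
proof -
  let ?k = "i + j + 1"
  have N: "N > 0" using p_pos by simp
  have c: "0 \<le> ?k" "?k \<le> N" "i * N < ?k * int q" "?k * int q < (i + 1) * N"
    using assms p_pos q_pos by (auto simp: hits_D)
  have "?k \<noteq> 0" "?k \<noteq> N"
    using c not_mult_strictly_between[OF N, of i 0] not_mult_strictly_between[OF N, of i "int q"]
    by (auto simp: mult.commute)
  moreover have "diag_quot (int p) (int q) ?k = i"
    using c by (intro diag_quot_eqI) auto
  ultimately show ?thesis
    using c by (intro exI[of _ ?k]) (auto simp: diag_edge_def)
qed

lemma gap_edge_of_hits_H:
  assumes "hits p q (H i j) s"
  shows "\<exists>k. 1 \<le> k \<and> k + 1 < N \<and> gap_edge (int p) (int q) k = H i j"
proof -
  let ?k = "i + j"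
  have P: "int p > 0" using p_pos by simp
  have c: "0 \<le> j" "j \<le> int p" "i * int p < j * int q" "j * int q < (i + 1) * int p"
    using assms p_pos q_pos by (auto simp: hits_H)
  have j: "j \<noteq> 0" "j \<noteq> int p"
    using c not_mult_strictly_between[OF P, of i 0] not_mult_strictly_between[OF P, of i "int q"]
    by (auto simp: mult.commute)
  have "0 < (i + 1) * int p" using c j by (smt (verit) mult_nonneg_nonneg of_nat_0_le_iff)
  then have i0: "0 \<le> i" using P by (simp add: zero_less_mult_iff)
  have "i * int p < int q * int p"
    using c mult_right_mono[OF c(2), of "int q"] by (simp add: mult.commute)
  then have iq: "i < int q" using P by (simp add: mult_less_cancel_right_pos)
  have k: "1 \<le> ?k" "?k + 1 < N" using i0 iq j c by auto
  have rem: "diag_rem (int p) (int q) ?k = j * int q - i * int p"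
    using div_mod_unique_int[of "j * int q - i * int p" N "?k * int q" i] c unfolding diag_rem_def
    by (simp add: algebra_simps)
  have "diag_quot (int p) (int q) ?k = i"
    using c by (intro diag_quot_eqI) (auto simp: algebra_simps)
  moreover have "\<not> diag_rem (int p) (int q) (?k + 1) < diag_rem (int p) (int q) ?k"
    using diag_rem_Suc[OF k] rem c(4) by (auto simp: algebra_simps)
  ultimately show ?thesis
    using k by (intro exI[of _ ?k]) (simp add: gap_edge_def)
qed

lemma gap_edge_of_hits_V:
  assumes "hits p q (V i j) s"
  shows "\<exists>k. 1 \<le> k \<and> k + 1 < N \<and> gap_edge (int p) (int q) k = V i j"
proof -
  let ?k = "i + j"
  have Q: "int q > 0" using q_pos by simp
  have c: "0 \<le> i" "i \<le> int q" "j * int q < i * int p" "i * int p < (j + 1) * int q"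
    using assms p_pos q_pos by (auto simp: hits_V)
  have i: "i \<noteq> 0" "i \<noteq> int q"
    using c not_mult_strictly_between[OF Q, of j 0] not_mult_strictly_between[OF Q, of j "int p"]
    by (auto simp: mult.commute)
  have "0 < (j + 1) * int q" using c i by (smt (verit) mult_nonneg_nonneg of_nat_0_le_iff)
  then have j0: "0 \<le> j" using Q by (simp add: zero_less_mult_iff)
  have "j * int q < int p * int q"
    using c mult_right_mono[OF c(2), of "int p"] by (simp add: mult.commute)
  then have jp: "j < int p" using Q by (simp add: mult_less_cancel_right_pos)
  have k: "1 \<le> ?k" "?k + 1 < N" using j0 jp i c by auto
  have rem: "diag_rem (int p) (int q) ?k = j * int q - i * int p + N"
    using div_mod_unique_int[of "j * int q - i * int p + N" N "?k * int q" "i - 1"] c unfolding diag_rem_def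
    by (simp add: algebra_simps)
  have "diag_quot (int p) (int q) ?k = i - 1"
    using c by (intro diag_quot_eqI) (auto simp: algebra_simps)
  moreover have "diag_rem (int p) (int q) (?k + 1) < diag_rem (int p) (int q) ?k"
    using diag_rem_Suc[OF k] rem c(4) p_pos by (auto simp: algebra_simps)
  ultimately show ?thesis
    using k by (intro exI[of _ ?k]) (simp add: gap_edge_def)
qed

lemma cut_edge_hits:
  assumes "m < nat (2 * N - 3)"
  shows "hits p q (cut_edge (int p) (int q) m) (hit_param p q (cut_edge (int p) (int q) m))"
  using diag_edge_hits gap_edge_hits half_index_bounds[OF assms] half_index_bound_odd[OF assms]
  unfolding cut_edge_def Let_def by auto

lemma hit_param_cut_edge_Suc:
  assumes "Suc m < nat (2 * N - 3)"
  shows "hit_param p q (cut_edge (int p) (int q) m) < hit_param p q (cut_edge (int p) (int q) (Suc m))"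
proof (cases "even m")
  case True
  let ?k = "int (m div 2) + 1"
  have k: "1 \<le> ?k" "?k + 1 < N" using half_index_bound_Suc_even[OF assms True] by auto
  have "Suc m div 2 = m div 2" using True by presburger
  then have "cut_edge (int p) (int q) m = diag_edge (int p) (int q) ?k"
    "cut_edge (int p) (int q) (Suc m) = gap_edge (int p) (int q) ?k"
    using True by (auto simp: cut_edge_def)
  then show ?thesis
    using hit_param_gap_edge(1)[OF k] hit_param_diag_edge[of ?k] by simp
next
  case False
  let ?k = "int (m div 2) + 1"
  have k: "1 \<le> ?k" "?k + 1 < N" using half_index_bound_odd[of m N] assms False by auto
  have "Suc m div 2 = m div 2 + 1" using False by presburger
  then have "cut_edge (int p) (int q) m = gap_edge (int p) (int q) ?k"
    "cut_edge (int p) (int q) (Suc m) = diag_edge (int p) (int q) (?k + 1)"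
    using False by (auto simp: cut_edge_def add.commute)
  then show ?thesis
    using hit_param_gap_edge(2)[OF k] hit_param_diag_edge[of "?k + 1"] by simp
qed

lemma sorted_cut_edges:
  "sorted_wrt (\<lambda>e e'. hit_param p q e < hit_param p q e') (cut_edges (int p) (int q))"
proof -
  have trans: "transp (\<lambda>e e'. hit_param p q e < hit_param p q e')"
    by (rule transpI) simp
  show ?thesis
    unfolding sorted_wrt_iff_nth_Suc_transp[OF trans] using hit_param_cut_edge_Suc by (simp add: cut_edges_def)
qed

lemma set_cut_edges: "set (cut_edges (int p) (int q)) = crossed_edges p q"
proof
  show "set (cut_edges (int p) (int q)) \<subseteq> crossed_edges p q"
  proof
    fix e
    assume "e \<in> set (cut_edges (int p) (int q))"
    then obtain m where "m < nat (2 * N - 3)" "e = cut_edge (int p) (int q) m"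
      unfolding cut_edges_def by auto
    then show "e \<in> crossed_edges p q"
      unfolding crossed_edges_def using cut_edge_hits by blast
  qed
next
  have diag_mem: "diag_edge (int p) (int q) k \<in> set (cut_edges (int p) (int q))" if "1 \<le> k" "k < N" for k
    using that cut_edge_diag_edge[of k] unfolding cut_edges_def
    by (auto intro!: image_eqI[of _ _ "nat (2 * k - 2)"])
  have gap_mem: "gap_edge (int p) (int q) k \<in> set (cut_edges (int p) (int q))" if "1 \<le> k" "k + 1 < N" for k
    using that cut_edge_gap_edge[of k] unfolding cut_edges_def
    by (auto intro!: image_eqI[of _ _ "nat (2 * k - 1)"])
  show "crossed_edges p q \<subseteq> set (cut_edges (int p) (int q))"
    unfolding crossed_edges_def
  proof (intro subsetI, elim CollectE exE)
    fix e s
    assume "hits p q e s"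
    then consider k where "1 \<le> k" "k < N" "e = diag_edge (int p) (int q) k"
      | k where "1 \<le> k" "k + 1 < N" "e = gap_edge (int p) (int q) k"
      by (cases e) (metis diag_edge_of_hits gap_edge_of_hits_H gap_edge_of_hits_V)+
    then show "e \<in> set (cut_edges (int p) (int q))"
      using diag_mem gap_mem by cases auto
  qed
qed

lemma crossed_list_eq_cut_edges: "crossed_list p q = cut_edges (int p) (int q)"
proof -
  let ?R = "\<lambda>e e'. \<forall>s s'. hits p q e s \<longrightarrow> hits p q e' s' \<longrightarrow> s < s'"
  let ?less = "\<lambda>e e'. hit_param p q e < hit_param p q e'"
  let ?es = "cut_edges (int p) (int q)"
  have hits_param: "hits p q e (hit_param p q e)" if "e \<in> crossed_edges p q" for e
    using that hit_param_unique[OF p_pos q_pos] unfolding crossed_edges_def by auto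
  have R_iff: "?R e e' \<longleftrightarrow> ?less e e'" if "e \<in> crossed_edges p q" "e' \<in> crossed_edges p q" for e e'
    using hits_param[OF that(1)] hits_param[OF that(2)] hit_param_unique[OF p_pos q_pos] by blast
  have "sorted_wrt (<) (map (hit_param p q) ?es)"
    using sorted_cut_edges by (simp add: sorted_wrt_map)
  then have "distinct (map (hit_param p q) ?es)"
    using strict_sorted_iff by blast
  then have distinct: "distinct ?es" and inj: "inj_on (hit_param p q) (set ?es)"
    by (simp_all add: distinct_map)
  have sorted: "sorted_wrt ?R ?es"
  proof (rule sorted_wrt_mono_rel[OF _ sorted_cut_edges])
    fix e e'
    assume "e \<in> set ?es" "e' \<in> set ?es" "?less e e'"
    then show "?R e e'" using R_iff set_cut_edges by blast
  qed
  have unique: "es = ?es" if es: "distinct es \<and> set es = crossed_edges p q \<and> sorted_wrt ?R es" for es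
  proof (rule sorted_wrt_key_unique[OF inj])
    show "sorted_wrt ?less es"
    proof (rule sorted_wrt_mono_rel[of _ ?R])
      fix e e'
      assume "e \<in> set es" "e' \<in> set es" "?R e e'"
      then show "?less e e'" using R_iff es by blast
    qed (use es in blast)
  qed (use es set_cut_edges sorted_cut_edges in auto)
  show ?thesis
    unfolding crossed_list_def using distinct set_cut_edges sorted unique by (intro the_equality) blast+
qed

lemma edge_letter_diag_edge:
  assumes "1 \<le> k" "k < N"
  shows "edge_letter p q (diag_edge (int p) (int q) k) = (Y, N \<le> 2 * diag_rem (int p) (int q) k)"
proof -
  let ?i = "diag_quot (int p) (int q) k" and ?r = "diag_rem (int p) (int q) k"
  have "int p * (2 * ?i + 1) \<le> int q * (2 * (k - 1 - ?i) + 1) \<longleftrightarrow> N \<le> 2 * ?r"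
    using diag_quot_rem(1)[of k] by (auto simp: algebra_simps)
  then show ?thesis
    unfolding edge_letter_def diag_edge_def using not_right_side_mid_D by simp
qed

lemma edge_letter_gap_edge:
  assumes "1 \<le> k" "k + 1 < N"
  shows "edge_letter p q (gap_edge (int p) (int q) k) =
    ((if diag_rem (int p) (int q) (k + 1) < diag_rem (int p) (int q) k then Z else X),
     N \<le> diag_rem (int p) (int q) k + diag_rem (int p) (int q) (k + 1))"
proof -
  let ?i = "diag_quot (int p) (int q) k" and ?r = "diag_rem (int p) (int q) k"
  have d: "k * int q = ?i * N + ?r" using diag_quot_rem(1) .
  from assms show ?thesis
  proof (cases rule: gap_edge_cases)
    case 1
    have "int p * (2 * ?i + 1) \<le> int q * (2 * (k - ?i)) \<longleftrightarrow> N \<le> ?r + diag_rem (int p) (int q) (k + 1)"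
      using d 1(2,3) by (auto simp: algebra_simps)
    then show ?thesis
      unfolding 1(1) edge_letter_def using not_right_side_mid_H 1 by simp
  next
    case 2
    have "int p * (2 * (?i + 1)) \<le> int q * (2 * (k - ?i - 1) + 1) \<longleftrightarrow> N \<le> ?r + diag_rem (int p) (int q) (k + 1)"
      using d 2(2,3) by (auto simp: algebra_simps)
    then show ?thesis
      unfolding 2(1) edge_letter_def using not_right_side_mid_V 2 p_pos by simp
  qed
qed

lemma lattice_word_eq_cut_word: "lattice_word p q = cut_word (int p) (int q)"
proof -
  have "edge_letter p q (cut_edge (int p) (int q) m) = cut_letter (int p) (int q) m"
    if m: "m < nat (2 * N - 3)" for m
  proof (cases "even m")
    case True
    then show ?thesis
      using edge_letter_diag_edge[of "int (m div 2) + 1"] half_index_bounds[OF m]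
      unfolding cut_edge_def cut_letter_def Let_def by simp
  next
    case False
    then show ?thesis
      using edge_letter_gap_edge[of "int (m div 2) + 1"] half_index_bounds[OF m] half_index_bound_odd[OF m]
      unfolding cut_edge_def cut_letter_def Let_def by simp
  qed
  then show ?thesis
    unfolding lattice_word_def crossed_list_eq_cut_edges cut_word_def cut_edges_def by simp
qed

end

section \<open>Cutting words of Farey mediants\<close>

lemma scaled_le_iff_less:
  fixes A B t Xa Xb :: int
  assumes "0 < A" "0 < B" "0 < t" "t < A + B" "Xb * A = Xa * B - t"
  shows "B \<le> Xb \<longleftrightarrow> A < Xa"
proof
  assume h: "B \<le> Xb"
  show "A < Xa"
  proof (rule ccontr)
    assume "\<not> A < Xa"
    then have "Xa * B \<le> A * B" using assms by (intro mult_right_mono) auto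
    moreover have "A * B \<le> Xb * A" using h assms by (metis mult.commute mult_right_mono order_less_imp_le)
    ultimately show False using assms(3,5) by linarith
  qed
next
  assume h: "A < Xa"
  show "B \<le> Xb"
  proof (rule ccontr)
    assume "\<not> B \<le> Xb"
    then have "Xb * A \<le> (B - 1) * A" using assms by (intro mult_right_mono) auto
    moreover have "(A + 1) * B \<le> Xa * B" using h assms by (intro mult_right_mono) auto
    ultimately show False using assms(4,5) by (simp add: algebra_simps)
  qed
qed

lemma scaled_neg_iff_neg:
  fixes A B s Da Db :: int
  assumes "0 < A" "\<bar>s\<bar> < B" "Da \<noteq> 0" "Db * A = Da * B + s"
  shows "Db < 0 \<longleftrightarrow> Da < 0"
proof
  assume h: "Db < 0"
  show "Da < 0"
  proof (rule ccontr)
    assume "\<not> Da < 0"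
    then have "1 * B \<le> Da * B" using assms by (intro mult_right_mono) auto
    moreover have "Db * A < 0" using h assms(1) by (simp add: mult_neg_pos)
    ultimately show False using assms(2,4) by (simp add: abs_less_iff)
  qed
next
  assume h: "Da < 0"
  show "Db < 0"
  proof (rule ccontr)
    assume "\<not> Db < 0"
    then have "0 \<le> Db * A" using assms(1) by simp
    moreover have "Da * B \<le> (-1) * B" using h assms by (intro mult_right_mono) auto
    ultimately show False using assms(2,4) by (simp add: abs_less_iff)
  qed
qed

locale farey_pair =
  fixes a b e f :: int
  assumes a_nonneg: "0 \<le> a" and b_nonneg: "0 \<le> b" and e_nonneg: "0 \<le> e" and f_nonneg: "0 \<le> f"
    and det: "e * b - a * f = 1"
begin

lemma b_pos: "1 \<le> b" and e_pos: "1 \<le> e"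
  using det a_nonneg b_nonneg e_nonneg f_nonneg mult_nonneg_nonneg[of a f] by (smt (verit) mult_eq_0_iff)+

lemma mediant_det_left: "(b + f) * (a + b) = b * ((a + e) + (b + f)) - 1"
  using det by (simp add: algebra_simps)

lemma mediant_det_right: "(b + f) * (e + f) = f * ((a + e) + (b + f)) + 1"
  using det by (simp add: algebra_simps)

lemma diag_rem_mediant_left:
  assumes a: "1 \<le> a" and k: "1 \<le> k" "k < a + b"
  shows "diag_rem (a + e) (b + f) k * (a + b) = diag_rem a b k * ((a + e) + (b + f)) - k"
proof -
  interpret left: coprime_pos a b
    using a b_pos coprime_of_det_eq_1(1)[OF det] by unfold_locales auto
  let ?N = "(a + e) + (b + f)" and ?r = "diag_rem a b k"
  have r: "1 \<le> ?r" "?r \<le> a + b - 1"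
    using left.diag_rem_pos[OF _ k(2)] k left.diag_quot_rem(3)[of k] by auto
  have kb: "k * b = diag_quot a b k * (a + b) + ?r" using left.diag_quot_rem(1) .
  have eq: "k * (b + f) * (a + b) = diag_quot a b k * (?N * (a + b)) + (?r * ?N - k)"
  proof -
    have "k * (b + f) * (a + b) = k * (b * ?N - 1)" using mediant_det_left by simp
    also have "\<dots> = (k * b) * ?N - k" by (simp add: algebra_simps)
    also have "\<dots> = diag_quot a b k * (?N * (a + b)) + (?r * ?N - k)" unfolding kb by (simp add: algebra_simps)
    finally show ?thesis .
  qed
  have "a + b \<le> ?N" using e_nonneg f_nonneg by simp
  moreover have "?N \<le> ?r * ?N" "?r * ?N \<le> (a + b - 1) * ?N"
    using r a b_pos e_nonneg f_nonneg mult_right_mono[of 1 ?r ?N] by (auto intro: mult_right_mono)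
  ultimately have "0 \<le> ?r * ?N - k" "?r * ?N - k < ?N * (a + b)"
    using k by (auto simp: algebra_simps)
  then have "(k * (b + f) * (a + b)) mod (?N * (a + b)) = ?r * ?N - k"
    using div_mod_unique_int[OF _ _ eq] by simp
  moreover have "(k * (b + f) * (a + b)) mod (?N * (a + b)) = diag_rem (a + e) (b + f) k * (a + b)"
    unfolding diag_rem_def by (simp add: mod_mult_mult2)
  ultimately show ?thesis by simp
qed

lemma diag_rem_mediant_right:
  assumes f: "1 \<le> f" and k: "1 \<le> k" "k < e + f"
  shows "diag_rem (a + e) (b + f) (a + b + k) * (e + f) = diag_rem e f k * ((a + e) + (b + f)) - (e + f - k)"
proof -
  interpret right: coprime_pos e f
    using e_pos f coprime_of_det_eq_1(2)[OF det] by unfold_locales auto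
  let ?N = "(a + e) + (b + f)" and ?r = "diag_rem e f k"
  have r: "1 \<le> ?r" "?r \<le> e + f - 1"
    using right.diag_rem_pos[OF _ k(2)] k right.diag_quot_rem(3)[of k] by auto
  have kf: "k * f = diag_quot e f k * (e + f) + ?r" using right.diag_quot_rem(1) .
  have eq: "(a + b + k) * (b + f) * (e + f) = (b + diag_quot e f k) * (?N * (e + f)) + (?r * ?N - (e + f - k))"
  proof -
    have "(a + b + k) * (b + f) * (e + f) = (e + f) * ((b + f) * (a + b)) + k * ((b + f) * (e + f))"
      by (simp add: algebra_simps)
    also have "\<dots> = (e + f) * (b * ?N - 1) + k * (f * ?N + 1)"
      using mediant_det_left mediant_det_right by simp
    also have "\<dots> = ?N * (b * (e + f)) + (k * f) * ?N - (e + f - k)" by (simp add: algebra_simps)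
    also have "\<dots> = (b + diag_quot e f k) * (?N * (e + f)) + (?r * ?N - (e + f - k))"
      unfolding kf by (simp add: algebra_simps)
    finally show ?thesis .
  qed
  have "e + f \<le> ?N" using a_nonneg b_nonneg by simp
  moreover have "?N \<le> ?r * ?N" "?r * ?N \<le> (e + f - 1) * ?N"
    using r e_pos f a_nonneg b_nonneg mult_right_mono[of 1 ?r ?N] by (auto intro: mult_right_mono)
  ultimately have "0 \<le> ?r * ?N - (e + f - k)" "?r * ?N - (e + f - k) < ?N * (e + f)"
    using k by (auto simp: algebra_simps)
  then have "((a + b + k) * (b + f) * (e + f)) mod (?N * (e + f)) = ?r * ?N - (e + f - k)"
    using div_mod_unique_int[OF _ _ eq] by simp
  moreover have "((a + b + k) * (b + f) * (e + f)) mod (?N * (e + f)) = diag_rem (a + e) (b + f) (a + b + k) * (e + f)"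
    unfolding diag_rem_def by (simp add: mod_mult_mult2)
  ultimately show ?thesis by simp
qed

lemma cut_letter_mediant_left:
  assumes a: "1 \<le> a" and m: "m < nat (2 * (a + b) - 3)"
  shows "cut_letter (a + e) (b + f) m = inv_letter (cut_letter a b (nat (2 * (a + b) - 3) - 1 - m))"
proof -
  interpret left: coprime_pos a b
    using a b_pos coprime_of_det_eq_1(1)[OF det] by unfold_locales auto
  let ?n = "a + b" and ?N = "(a + e) + (b + f)" and ?k = "int (m div 2) + 1"
  have k: "1 \<le> ?k" "?k < ?n" using half_index_bounds[OF m] by auto
  have n: "?n \<le> ?N" "0 < ?n" using e_nonneg f_nonneg a b_pos by auto
  have R0: "diag_rem (a + e) (b + f) ?k * ?n = diag_rem a b ?k * ?N - ?k"
    using diag_rem_mediant_left[OF a k] .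
  show ?thesis
  proof (cases "even m")
    case True
    have "2 * diag_rem (a + e) (b + f) ?k * ?n = 2 * diag_rem a b ?k * ?N - 2 * ?k"
      using R0 by (simp add: algebra_simps)
    then have "?N \<le> 2 * diag_rem (a + e) (b + f) ?k \<longleftrightarrow> ?n < 2 * diag_rem a b ?k"
      by (rule scaled_le_iff_less[OF n(2), rotated 3]) (use k n in auto)
    then show ?thesis
      using True left.inv_cut_letter_reverse[OF m] unfolding cut_letter_def[of "a + e"] by simp
  next
    case False
    have k2: "?k + 1 < ?n" using half_index_bound_odd[OF m False] by simp
    have R1: "diag_rem (a + e) (b + f) (?k + 1) * ?n = diag_rem a b (?k + 1) * ?N - (?k + 1)"
      using diag_rem_mediant_left[OF a _ k2] k by simp
    have "(diag_rem (a + e) (b + f) ?k + diag_rem (a + e) (b + f) (?k + 1)) * ?n =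
        (diag_rem a b ?k + diag_rem a b (?k + 1)) * ?N - (2 * ?k + 1)"
      using R0 R1 by (simp add: algebra_simps)
    then have sum: "?N \<le> diag_rem (a + e) (b + f) ?k + diag_rem (a + e) (b + f) (?k + 1) \<longleftrightarrow>
        ?n < diag_rem a b ?k + diag_rem a b (?k + 1)"
      by (rule scaled_le_iff_less[OF n(2), rotated 3]) (use k k2 n in auto)
    have "(diag_rem (a + e) (b + f) (?k + 1) - diag_rem (a + e) (b + f) ?k) * ?n =
        (diag_rem a b (?k + 1) - diag_rem a b ?k) * ?N + (-1)"
      using R0 R1 by (simp add: algebra_simps)
    then have diff: "diag_rem (a + e) (b + f) (?k + 1) - diag_rem (a + e) (b + f) ?k < 0 \<longleftrightarrow>
        diag_rem a b (?k + 1) - diag_rem a b ?k < 0"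
      by (rule scaled_neg_iff_neg[OF n(2), rotated 2]) (use n k left.diag_rem_Suc_neq[OF k(1) k2] in auto)
    show ?thesis
      using False sum diff left.inv_cut_letter_reverse[OF m] unfolding cut_letter_def[of "a + e"] by simp
  qed
qed

lemma cut_letter_mediant_right:
  assumes f: "1 \<le> f" and m: "m < nat (2 * (e + f) - 3)"
  shows "cut_letter (a + e) (b + f) (2 * nat (a + b) + m) = inv_letter (cut_letter e f (nat (2 * (e + f) - 3) - 1 - m))"
proof -
  interpret right: coprime_pos e f
    using e_pos f coprime_of_det_eq_1(2)[OF det] by unfold_locales auto
  let ?n = "e + f" and ?N = "(a + e) + (b + f)" and ?k = "int (m div 2) + 1"
  have k: "1 \<le> ?k" "?k < ?n" using half_index_bounds[OF m] by auto
  have n: "?n \<le> ?N" "0 < ?n" using a_nonneg b_nonneg e_pos f by auto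
  have idx: "int ((2 * nat (a + b) + m) div 2) + 1 = a + b + ?k" using a_nonneg b_nonneg by simp
  have R0: "diag_rem (a + e) (b + f) (a + b + ?k) * ?n = diag_rem e f ?k * ?N - (?n - ?k)"
    using diag_rem_mediant_right[OF f k] .
  show ?thesis
  proof (cases "even m")
    case True
    have "2 * diag_rem (a + e) (b + f) (a + b + ?k) * ?n = 2 * diag_rem e f ?k * ?N - 2 * (?n - ?k)"
      using R0 by (simp add: algebra_simps)
    then have "?N \<le> 2 * diag_rem (a + e) (b + f) (a + b + ?k) \<longleftrightarrow> ?n < 2 * diag_rem e f ?k"
      by (rule scaled_le_iff_less[OF n(2), rotated 3]) (use k n in auto)
    then show ?thesis
      using True right.inv_cut_letter_reverse[OF m] unfolding cut_letter_def[of "a + e"] Let_def idx by simp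
  next
    case False
    have k2: "?k + 1 < ?n" using half_index_bound_odd[OF m False] by simp
    have R1: "diag_rem (a + e) (b + f) (a + b + ?k + 1) * ?n = diag_rem e f (?k + 1) * ?N - (?n - (?k + 1))"
      using diag_rem_mediant_right[OF f _ k2] k by (simp add: add.assoc)
    have "(diag_rem (a + e) (b + f) (a + b + ?k) + diag_rem (a + e) (b + f) (a + b + ?k + 1)) * ?n =
        (diag_rem e f ?k + diag_rem e f (?k + 1)) * ?N - (2 * ?n - 2 * ?k - 1)"
      using R0 R1 by (simp add: algebra_simps)
    then have sum: "?N \<le> diag_rem (a + e) (b + f) (a + b + ?k) + diag_rem (a + e) (b + f) (a + b + ?k + 1) \<longleftrightarrow>
        ?n < diag_rem e f ?k + diag_rem e f (?k + 1)"
      by (rule scaled_le_iff_less[OF n(2), rotated 3]) (use k k2 n in auto)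
    have "(diag_rem (a + e) (b + f) (a + b + ?k + 1) - diag_rem (a + e) (b + f) (a + b + ?k)) * ?n =
        (diag_rem e f (?k + 1) - diag_rem e f ?k) * ?N + 1"
      using R0 R1 by (simp add: algebra_simps)
    then have diff: "diag_rem (a + e) (b + f) (a + b + ?k + 1) - diag_rem (a + e) (b + f) (a + b + ?k) < 0 \<longleftrightarrow>
        diag_rem e f (?k + 1) - diag_rem e f ?k < 0"
      by (rule scaled_neg_iff_neg[OF n(2), rotated 2]) (use n k k2 right.diag_rem_Suc_neq[OF k(1) k2] in auto)
    show ?thesis
      using False sum diff right.inv_cut_letter_reverse[OF m] unfolding cut_letter_def[of "a + e"] Let_def idx
      by (simp add: add.assoc)
  qed
qed

lemma diag_rem_mediant_junction:
  "diag_rem (a + e) (b + f) (a + b - 1) = a + e - 1"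
  "diag_rem (a + e) (b + f) (a + b) = a + e + b + f - 1"
  "diag_rem (a + e) (b + f) (a + b + 1) = b + f - 1"
proof -
  have bounds: "0 \<le> a + e - 1" "a + e - 1 < (a + e) + (b + f)"
    "0 \<le> b + f - 1" "b + f - 1 < (a + e) + (b + f)"
    using a_nonneg b_pos e_pos f_nonneg by auto
  have "(a + b - 1) * (b + f) = (b - 1) * ((a + e) + (b + f)) + (a + e - 1)"
    using mediant_det_left by (simp add: algebra_simps)
  then show "diag_rem (a + e) (b + f) (a + b - 1) = a + e - 1"
    using div_mod_unique_int[OF bounds(1,2)] unfolding diag_rem_def by blast
  have "(a + b) * (b + f) = (b - 1) * ((a + e) + (b + f)) + ((a + e) + (b + f) - 1)"
    using mediant_det_left by (simp add: algebra_simps)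
  moreover have "0 \<le> (a + e) + (b + f) - 1" "(a + e) + (b + f) - 1 < (a + e) + (b + f)"
    using bounds by auto
  ultimately show "diag_rem (a + e) (b + f) (a + b) = a + e + b + f - 1"
    using div_mod_unique_int unfolding diag_rem_def by (metis add.assoc)
  have "(a + b + 1) * (b + f) = b * ((a + e) + (b + f)) + (b + f - 1)"
    using mediant_det_left by (simp add: algebra_simps)
  then show "diag_rem (a + e) (b + f) (a + b + 1) = b + f - 1"
    using div_mod_unique_int[OF bounds(3,4)] unfolding diag_rem_def by blast
qed

lemma cut_letter_mediant_junction:
  shows "1 \<le> a \<Longrightarrow> cut_letter (a + e) (b + f) (2 * nat (a + b) - 3) = (X, True)"
    and "cut_letter (a + e) (b + f) (2 * nat (a + b) - 2) = (Y, True)"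
    and "1 \<le> f \<Longrightarrow> cut_letter (a + e) (b + f) (2 * nat (a + b) - 1) = (Z, True)"
proof -
  note rem = diag_rem_mediant_junction
  assume a: "1 \<le> a"
  then have "2 * nat (a + b) - 3 = 2 * nat (a + b - 2) + 1" using b_pos by linarith
  then show "cut_letter (a + e) (b + f) (2 * nat (a + b) - 3) = (X, True)"
    unfolding cut_letter_def Let_def using rem a b_pos e_pos f_nonneg by (simp add: algebra_simps)
next
  note rem = diag_rem_mediant_junction
  have "2 * nat (a + b) - 2 = 2 * nat (a + b - 1)" using a_nonneg b_pos by linarith
  then show "cut_letter (a + e) (b + f) (2 * nat (a + b) - 2) = (Y, True)"
    unfolding cut_letter_def Let_def using rem a_nonneg b_pos e_pos f_nonneg by (simp add: algebra_simps)
next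
  note rem = diag_rem_mediant_junction
  assume f: "1 \<le> f"
  have "2 * nat (a + b) - 1 = 2 * nat (a + b - 1) + 1" using a_nonneg b_pos by linarith
  then show "cut_letter (a + e) (b + f) (2 * nat (a + b) - 1) = (Z, True)"
    unfolding cut_letter_def Let_def using rem a_nonneg b_pos e_pos f by (simp add: algebra_simps)
qed

lemma length_cut_word_farey:
  "length (cut_word a b) = 2 * nat (a + b) - 3" "length (cut_word e f) = 2 * nat (e + f) - 3"
  "length (cut_word (a + e) (b + f)) = 2 * nat (a + b) + 2 * nat (e + f) - 3"
  "1 \<le> nat (a + b)" "1 \<le> nat (e + f)"
proof -
  have "nat ((a + e) + (b + f)) = nat (a + b) + nat (e + f)"
    using a_nonneg b_pos e_pos f_nonneg by simp
  then show "length (cut_word (a + e) (b + f)) = 2 * nat (a + b) + 2 * nat (e + f) - 3"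
    unfolding length_cut_word nat_two_mult_minus_three by simp
  show "length (cut_word a b) = 2 * nat (a + b) - 3" "length (cut_word e f) = 2 * nat (e + f) - 3"
    unfolding length_cut_word nat_two_mult_minus_three by simp_all
  show "1 \<le> nat (a + b)" "1 \<le> nat (e + f)"
    using a_nonneg b_pos e_pos f_nonneg by simp_all
qed

lemma take_cut_word_mediant:
  assumes a: "1 \<le> a"
  shows "take (2 * nat (a + b) - 2) (cut_word (a + e) (b + f)) = inv_word (cut_word a b) @ wx"
proof -
  let ?w = "cut_word (a + e) (b + f)" and ?n = "length (cut_word a b)"
  have n: "?n = nat (2 * (a + b) - 3)" by (simp add: length_cut_word)
  have j: "2 * nat (a + b) - 2 = Suc ?n"
    using length_cut_word_farey(1) a b_pos by linarith
  have len: "Suc ?n < length ?w"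
    using length_cut_word_farey(1,3,5) a b_pos by linarith
  show ?thesis unfolding j
  proof (rule nth_equalityI)
    show "length (take (Suc ?n) ?w) = length (inv_word (cut_word a b) @ wx)"
      using len by simp
    fix i
    assume "i < length (take (Suc ?n) ?w)"
    then have i: "i < Suc ?n" by simp
    then have lhs: "take (Suc ?n) ?w ! i = cut_letter (a + e) (b + f) i"
      using len by (simp add: nth_cut_word)
    show "take (Suc ?n) ?w ! i = (inv_word (cut_word a b) @ wx) ! i"
    proof (cases "i < ?n")
      case True
      then have "(inv_word (cut_word a b) @ wx) ! i = inv_letter (cut_letter a b (?n - 1 - i))"
        by (simp add: nth_append nth_inv_word nth_cut_word)
      then show ?thesis
        unfolding lhs using cut_letter_mediant_left[OF a, of i] True n by simp
    next
      case False
      then have "i = ?n" "?n = 2 * nat (a + b) - 3"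
        using i length_cut_word_farey(1) by simp_all
      then show ?thesis
        unfolding lhs using cut_letter_mediant_junction(1)[OF a] by (simp add: nth_append)
    qed
  qed
qed

lemma nth_cut_word_mediant: "cut_word (a + e) (b + f) ! (2 * nat (a + b) - 2) = (Y, True)"
proof -
  have "2 * nat (a + b) - 2 < length (cut_word (a + e) (b + f))"
    using length_cut_word_farey(3,4,5) by linarith
  then show ?thesis
    using cut_letter_mediant_junction(2) by (simp add: nth_cut_word)
qed

lemma drop_cut_word_mediant:
  assumes f: "1 \<le> f"
  shows "drop (2 * nat (a + b) - 1) (cut_word (a + e) (b + f)) = wz @ inv_word (cut_word e f)"
proof -
  let ?w = "cut_word (a + e) (b + f)" and ?n = "length (cut_word e f)" and ?j = "2 * nat (a + b) - 1"
  have n: "?n = nat (2 * (e + f) - 3)" by (simp add: length_cut_word)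
  have len: "length ?w = ?j + Suc ?n"
    using length_cut_word_farey(2,3,4) e_pos f by linarith
  show ?thesis
  proof (rule nth_equalityI)
    show "length (drop ?j ?w) = length (wz @ inv_word (cut_word e f))"
      using len by simp
    fix i
    assume "i < length (drop ?j ?w)"
    then have i: "i < Suc ?n" using len by simp
    then have lhs: "drop ?j ?w ! i = cut_letter (a + e) (b + f) (?j + i)"
      using len by (simp add: nth_cut_word)
    show "drop ?j ?w ! i = (wz @ inv_word (cut_word e f)) ! i"
    proof (cases i)
      case 0
      then show ?thesis unfolding lhs using cut_letter_mediant_junction(3)[OF f] by simp
    next
      case (Suc m)
      have idx: "?j + i = 2 * nat (a + b) + m"
        using Suc length_cut_word_farey(4) by linarith
      have "(wz @ inv_word (cut_word e f)) ! i = inv_letter (cut_letter e f (?n - 1 - m))"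
        using Suc i by (simp add: nth_inv_word nth_cut_word)
      then show ?thesis
        unfolding lhs idx using cut_letter_mediant_right[OF f, of m] Suc i n by simp
    qed
  qed
qed

lemma cut_word_mediant:
  "cut_word (a + e) (b + f) =
     (if a = 0 then [] else inv_word (cut_word a b) @ wx) @ wy @ (if f = 0 then [] else wz @ inv_word (cut_word e f))"
proof -
  let ?w = "cut_word (a + e) (b + f)" and ?j = "2 * nat (a + b) - 2"
  have j: "?j < length ?w"
    using length_cut_word_farey(3,4,5) by linarith
  have take: "take ?j ?w = (if a = 0 then [] else inv_word (cut_word a b) @ wx)"
  proof (cases "a = 0")
    case True
    then have "nat (a + b) = 1" using det b_nonneg by (simp add: zmult_eq_1_iff)
    then show ?thesis using True by simp
  qed (use take_cut_word_mediant a_nonneg in auto)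
  have drop: "drop (Suc ?j) ?w = (if f = 0 then [] else wz @ inv_word (cut_word e f))"
  proof (cases "f = 0")
    case True
    then have "nat (e + f) = 1" using det e_nonneg by (simp add: zmult_eq_1_iff)
    then have "length ?w \<le> Suc ?j" using length_cut_word_farey(3) by linarith
    then show ?thesis using True by simp
  next
    case False
    moreover have "Suc ?j = 2 * nat (a + b) - 1" using length_cut_word_farey(4) by linarith
    ultimately show ?thesis using drop_cut_word_mediant f_nonneg by simp
  qed
  show ?thesis
    using id_take_nth_drop[OF j] take drop nth_cut_word_mediant by simp
qed

end

section \<open>The word tree\<close>

definition farey_word :: "nat \<Rightarrow> nat \<Rightarrow> word" where
  "farey_word c d = (if d = 0 then wz else if c = 0 then wx else cut_word (int c) (int d))"

lemma farey_word_mediant: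
  fixes a b e f :: nat
  assumes det: "e * b = a * f + 1"
  shows "fg_equiv (farey_word (a + e) (b + f)) (inv_word (farey_word a b) @ [(X, True), (Y, True), (Z, True)] @ inv_word (farey_word e f))"
proof -
  interpret farey_pair "int a" "int b" "int e" "int f"
  proof
    have "int (e * b) = int (a * f + 1)" using det by (simp only:)
    then show "int e * int b - int a * int f = 1" by simp
  qed auto
  have b: "b \<noteq> 0" "e \<noteq> 0" using b_pos e_pos by auto
  have left: "fg_equiv (if int a = 0 then [] else inv_word (cut_word (int a) (int b)) @ wx) (inv_word (farey_word a b) @ wx)"
    using fg_equiv_sym[OF fg_equiv_cancel'[of wx]] b by (simp add: farey_word_def fg_equiv.fg_refl)
  have right: "fg_equiv (if int f = 0 then [] else wz @ inv_word (cut_word (int e) (int f))) (wz @ inv_word (farey_word e f))"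
    using fg_equiv_sym[OF fg_equiv_cancel[of wz]] b by (simp add: farey_word_def fg_equiv.fg_refl)
  have "farey_word (a + e) (b + f) = cut_word (int a + int e) (int b + int f)"
    using b by (simp add: farey_word_def)
  then show ?thesis
    unfolding cut_word_mediant using fg_equiv_append[OF left fg_equiv_append[OF fg_equiv.fg_refl[of wy] right]] by simp
qed

lemma farey_word_left_child:
  fixes a b e f :: nat
  assumes det: "e * b = a * f + 1"
    and B: "fg_equiv B (farey_word (a + e) (b + f))" and C: "fg_equiv C (farey_word e f)"
  shows "fg_equiv (B @ C @ inv_word B) (farey_word (a + (a + e)) (b + (b + f)))"
proof -
  let ?a = "farey_word a b" and ?b = "farey_word (a + e) (b + f)" and ?c = "farey_word e f"
  let ?xyz = "[(X, True), (Y, True), (Z, True)]"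
  have "fg_equiv (B @ C @ inv_word B) (?b @ ?c @ inv_word ?b)"
    using fg_equiv_append[OF B fg_equiv_append[OF C fg_equiv_inv_word[OF B]]] .
  also have "fg_equiv \<dots> ((inv_word ?a @ ?xyz) @ (inv_word ?c @ ?c) @ inv_word ?b)"
    using fg_equiv_append[OF farey_word_mediant[OF det] fg_equiv.fg_refl] by simp
  also have "fg_equiv \<dots> ((inv_word ?a @ ?xyz) @ [] @ inv_word ?b)"
    by (rule fg_equiv_context[OF fg_equiv_cancel'])
  also have "fg_equiv \<dots> (farey_word (a + (a + e)) (b + (b + f)))"
  proof -
    have "(a + e) * b = a * (b + f) + 1" using det by (simp add: algebra_simps)
    from fg_equiv_sym[OF farey_word_mediant[OF this]] show ?thesis by simp
  qed
  finally show ?thesis .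
qed

lemma farey_word_right_child:
  fixes a b e f :: nat
  assumes det: "e * b = a * f + 1"
    and A: "fg_equiv A (farey_word a b)" and B: "fg_equiv B (farey_word (a + e) (b + f))"
  shows "fg_equiv (inv_word B @ A @ B) (farey_word ((a + e) + e) ((b + f) + f))"
proof -
  let ?a = "farey_word a b" and ?b = "farey_word (a + e) (b + f)" and ?c = "farey_word e f"
  let ?xyz = "[(X, True), (Y, True), (Z, True)]"
  have "fg_equiv (inv_word B @ A @ B) (inv_word ?b @ ?a @ ?b)"
    using fg_equiv_append[OF fg_equiv_inv_word[OF B] fg_equiv_append[OF A B]] .
  also have "fg_equiv \<dots> (inv_word ?b @ (?a @ inv_word ?a) @ ?xyz @ inv_word ?c)"
    using fg_equiv_append[OF fg_equiv.fg_refl fg_equiv_append[OF fg_equiv.fg_refl farey_word_mediant[OF det]]]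
    by simp
  also have "fg_equiv \<dots> (inv_word ?b @ [] @ ?xyz @ inv_word ?c)"
    by (rule fg_equiv_context[OF fg_equiv_cancel])
  also have "fg_equiv \<dots> (farey_word ((a + e) + e) ((b + f) + f))"
  proof -
    have "e * (b + f) = (a + e) * f + 1" using det by (simp add: algebra_simps)
    from fg_equiv_sym[OF farey_word_mediant[OF this]] show ?thesis by simp
  qed
  finally show ?thesis .
qed

definition farey_triple :: "frac \<times> frac \<times> frac \<Rightarrow> bool" where
  "farey_triple T = (case T of ((a, b), (c, d), (e, f)) \<Rightarrow> c = a + e \<and> d = b + f \<and> e * b = a * f + 1)"

definition represents_farey :: "word \<times> word \<times> word \<Rightarrow> frac \<times> frac \<times> frac \<Rightarrow> bool" where
  "represents_farey W T = (case T of ((a, b), (c, d), (e, f)) \<Rightarrow> case W of (A, B, C) \<Rightarrow>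
      fg_equiv A (farey_word a b) \<and> fg_equiv B (farey_word c d) \<and> fg_equiv C (farey_word e f))"

lemma farey_triple_child: "farey_triple T \<Longrightarrow> farey_triple (farey_child x T)"
  by (cases x) (auto simp: farey_triple_def algebra_simps split: prod.splits)

lemma farey_triple_farey_vertex: "farey_triple (farey_vertex p)"
proof (induction p rule: rev_induct)
  case Nil
  then show ?case by (simp add: farey_vertex_def farey_root_def farey_triple_def)
next
  case (snoc x p)
  then show ?case by (simp add: farey_vertex_def farey_triple_child)
qed

lemma word_vertex_represents: "represents_farey (word_vertex p) (farey_vertex p)"
proof (induction p rule: rev_induct)
  case Nil
  have "cut_word 1 1 = wy"
    by (simp add: cut_word_def cut_letter_def diag_rem_def)
  then show ?case
    by (simp add: word_vertex_def farey_vertex_def word_root_def farey_root_def represents_farey_def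
        farey_word_def fg_equiv.fg_refl)
next
  case (snoc x p)
  obtain a b c d e f where V: "farey_vertex p = ((a, b), (c, d), (e, f))" by (metis prod.exhaust)
  obtain A B C where W: "word_vertex p = (A, B, C)" by (metis prod.exhaust)
  have h: "c = a + e" "d = b + f" "e * b = a * f + 1"
    using farey_triple_farey_vertex[of p] V by (auto simp: farey_triple_def)
  have r: "fg_equiv A (farey_word a b)" "fg_equiv B (farey_word (a + e) (b + f))" "fg_equiv C (farey_word e f)"
    using snoc V W h by (auto simp: represents_farey_def)
  have "farey_vertex (p @ [x]) = farey_child x (farey_vertex p)" "word_vertex (p @ [x]) = word_child x (word_vertex p)"
    by (simp_all add: farey_vertex_def word_vertex_def)
  then show ?case
    using V W h r farey_word_left_child[OF h(3) r(2,3)] farey_word_right_child[OF h(3) r(1,2)]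
    by (cases x) (simp_all add: represents_farey_def add.assoc)
qed

section \<open>Positions in the Farey tree\<close>

text \<open>Cross-multiplication also places 1/0 above every fraction with nonzero denominator.\<close>
fun frac_less :: "frac \<Rightarrow> frac \<Rightarrow> bool" where
  "frac_less (x1, x2) (y1, y2) \<longleftrightarrow> x1 * y2 < y1 * x2"

fun frac_eq :: "frac \<Rightarrow> frac \<Rightarrow> bool" where
  "frac_eq (x1, x2) (y1, y2) \<longleftrightarrow> x1 * y2 = y1 * x2"

lemma frac_less_trans:
  assumes "frac_less x y" "frac_less y z" "snd y > 0"
  shows "frac_less x z"
proof -
  obtain x1 x2 y1 y2 z1 z2 where xyz: "x = (x1, x2)" "y = (y1, y2)" "z = (z1, z2)" by (metis prod.exhaust)
  have h: "x1 * y2 < y1 * x2" "y1 * z2 < z1 * y2" "y2 > 0" using assms xyz by auto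
  have x2: "x2 > 0" using h(1) by (cases x2) auto
  have "x1 * y2 * z2 \<le> y1 * x2 * z2" using h(1) by (simp add: mult_right_mono)
  also have "\<dots> = (y1 * z2) * x2" by (simp add: algebra_simps)
  also have "\<dots> < (z1 * y2) * x2" using h(2) x2 by simp
  finally have "(x1 * z2) * y2 < (z1 * x2) * y2" by (simp add: algebra_simps)
  then show ?thesis using h(3) xyz by (simp add: mult_less_cancel2)
qed

lemma frac_less_not_eq: "frac_less x y \<Longrightarrow> \<not> frac_eq x y" "frac_less x y \<Longrightarrow> \<not> frac_eq y x"
  by (cases x; cases y; auto)+

definition farey_descend :: "frac \<times> frac \<times> frac \<Rightarrow> bool list \<Rightarrow> frac \<times> frac \<times> frac" where
  "farey_descend T q = fold farey_child q T"

lemma farey_descend_Nil [simp]: "farey_descend T [] = T"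
  unfolding farey_descend_def by simp

lemma farey_descend_Cons [simp]: "farey_descend T (x # q) = farey_descend (farey_child x T) q"
  unfolding farey_descend_def by simp

lemma farey_triple_pos: "farey_triple ((a, b), (c, d), (e, f)) \<Longrightarrow> 0 < b \<and> 0 < d"
  unfolding farey_triple_def by (cases b) auto

lemma farey_triple_less: "farey_triple ((a, b), (c, d), (e, f)) \<Longrightarrow> frac_less (a, b) (c, d) \<and> frac_less (c, d) (e, f)"
  unfolding farey_triple_def by (auto simp: algebra_simps)

lemma farey_descend_mid_between:
  "farey_triple T \<Longrightarrow>
    frac_less (fst T) (fst (snd (farey_descend T q))) \<and> frac_less (fst (snd (farey_descend T q))) (snd (snd T))"
proof (induction q arbitrary: T)
  case Nil
  then show ?case using farey_triple_less by (metis prod.collapse farey_descend_Nil)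
next
  case (Cons x q)
  obtain a b c d e f where T: "T = ((a, b), (c, d), (e, f))" by (metis prod.exhaust)
  have lt: "frac_less (a, b) (c, d)" "frac_less (c, d) (e, f)" "d > 0"
    using farey_triple_less farey_triple_pos Cons.prems T by auto
  note IH = Cons.IH[OF farey_triple_child[OF Cons.prems, of x]]
  show ?case
    using IH lt T frac_less_trans[of _ "(c, d)"] by (cases x) auto
qed

lemma mid_farey_descend_left: "farey_triple T \<Longrightarrow> frac_less (fst (snd (farey_descend T (True # q)))) (fst (snd T))"
  using farey_descend_mid_between[OF farey_triple_child, of T True q] by (cases T) auto

lemma mid_farey_descend_right: "farey_triple T \<Longrightarrow> frac_less (fst (snd T)) (fst (snd (farey_descend T (False # q))))"
  using farey_descend_mid_between[OF farey_triple_child, of T False q] by (cases T) auto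

lemma mid_farey_descend_ne:
  assumes "farey_triple T" "q \<noteq> []"
  shows "frac_less (fst (snd (farey_descend T q))) (fst (snd T)) \<or> frac_less (fst (snd T)) (fst (snd (farey_descend T q)))"
  using assms mid_farey_descend_left mid_farey_descend_right by (cases q; cases "hd q") auto

lemma mid_farey_descend_left_right:
  assumes "farey_triple T"
  shows "frac_less (fst (snd (farey_descend T (True # q)))) (fst (snd (farey_descend T (False # q'))))"
proof -
  have "snd (fst (snd T)) > 0" using assms farey_triple_pos by (cases T) auto
  then show ?thesis
    using frac_less_trans mid_farey_descend_left[OF assms] mid_farey_descend_right[OF assms] by blast
qed

lemma farey_descend_mid_inj:
  "farey_triple T \<Longrightarrow> frac_eq (fst (snd (farey_descend T q1))) (fst (snd (farey_descend T q2))) \<Longrightarrow> q1 = q2"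
proof (induction q1 arbitrary: T q2)
  case Nil
  then show ?case
    using mid_farey_descend_ne[OF Nil.prems(1), of q2] frac_less_not_eq by (metis farey_descend_Nil)
next
  case (Cons x q1)
  show ?case
  proof (cases q2)
    case Nil
    then show ?thesis
      using Cons.prems mid_farey_descend_ne[OF Cons.prems(1), of "x # q1"] frac_less_not_eq
      by (metis farey_descend_Nil list.distinct(1))
  next
    case (Cons y q2')
    show ?thesis
    proof (cases "x = y")
      case True
      then show ?thesis
        using Cons.IH[OF farey_triple_child[OF Cons.prems(1)]] Cons.prems(2) \<open>q2 = y # q2'\<close> by simp
    next
      case False
      then have "frac_less (fst (snd (farey_descend T (x # q1)))) (fst (snd (farey_descend T q2))) \<or>
          frac_less (fst (snd (farey_descend T q2))) (fst (snd (farey_descend T (x # q1))))"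
        using mid_farey_descend_left_right[OF Cons.prems(1)] \<open>q2 = y # q2'\<close> by (cases x) auto
      then show ?thesis
        using Cons.prems(2) frac_less_not_eq by blast
    qed
  qed
qed

lemma farey_triple_between_ge_mediant:
  assumes v: "farey_triple ((a, b), (c, d), (e, f))"
    and l1: "frac_less (a, b) (c', d')" and l2: "frac_less (c', d') (e, f)"
  shows "c \<le> c' \<and> d \<le> d'"
proof -
  have h: "c = a + e" "d = b + f" "e * b = a * f + 1" using v unfolding farey_triple_def by auto
  have "int (e * b) = int (a * f + 1)" using h(3) by simp
  then have dt: "int e * int b - int a * int f = 1" by simp
  \<comment> \<open>the coordinates of (c', d') in the basis (a, b), (e, f) of the lattice are positive\<close>
  define U where "U = int c' * int b - int a * int d'"
  define W where "W = int e * int d' - int c' * int f"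
  have "int (a * d') < int (c' * b)" using l1 by (simp only: frac_less.simps of_nat_less_iff)
  then have U: "U \<ge> 1" unfolding U_def by simp
  have "int (c' * f) < int (e * d')" using l2 by (simp only: frac_less.simps of_nat_less_iff)
  then have W: "W \<ge> 1" unfolding W_def by simp
  have "int c' * (int e * int b - int a * int f) = int e * U + int a * W"
    "int d' * (int e * int b - int a * int f) = int b * W + int f * U"
    unfolding U_def W_def by (simp_all add: algebra_simps)
  moreover have "int e * 1 \<le> int e * U" "int a * 1 \<le> int a * W" "int b * 1 \<le> int b * W" "int f * 1 \<le> int f * U"
    using U W by (intro mult_left_mono; simp)+
  ultimately show ?thesis using h dt by simp
qed

lemma farey_child_mid_sum_less:
  "farey_triple T \<Longrightarrow> fst (fst (snd T)) + snd (fst (snd T)) < fst (fst (snd (farey_child x T))) + snd (fst (snd (farey_child x T)))"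
  by (cases x) (auto simp: farey_triple_def split: prod.splits intro: gr0I)

lemma ex_farey_descend_mid:
  assumes "farey_triple T" "frac_less (fst T) (c', d')" "frac_less (c', d') (snd (snd T))"
  shows "\<exists>q. frac_eq (fst (snd (farey_descend T q))) (c', d')"
  using assms
proof (induction "c' + d' - (fst (fst (snd T)) + snd (fst (snd T)))" arbitrary: T rule: less_induct)
  case less
  obtain a b c d e f where T: "T = ((a, b), (c, d), (e, f))" by (metis prod.exhaust)
  show ?case
  proof (cases "c * d' = c' * d")
    case True
    then have "frac_eq (fst (snd (farey_descend T []))) (c', d')" using T by simp
    then show ?thesis by blast
  next
    case False
    define x where "x = (c' * d < c * d')"
    let ?T = "farey_child x T"
    have v: "farey_triple ?T" using farey_triple_child less.prems(1) by blast
    have "frac_less (fst ?T) (c', d') \<and> frac_less (c', d') (snd (snd ?T))"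
    proof (cases x)
      case True
      then show ?thesis using less.prems T by (simp add: x_def)
    next
      case False
      then show ?thesis using less.prems T \<open>c * d' \<noteq> c' * d\<close> by (simp add: x_def)
    qed
    then have between: "frac_less (fst ?T) (c', d')" "frac_less (c', d') (snd (snd ?T))" by auto
    then have "fst (fst (snd ?T)) \<le> c'" "snd (fst (snd ?T)) \<le> d'"
      using farey_triple_between_ge_mediant v by (metis prod.collapse)+
    then have "c' + d' - (fst (fst (snd ?T)) + snd (fst (snd ?T))) < c' + d' - (fst (fst (snd T)) + snd (fst (snd T)))"
      using farey_child_mid_sum_less[OF less.prems(1), of x] by linarith
    then obtain q where "frac_eq (fst (snd (farey_descend ?T q))) (c', d')"
      using less.hyps[OF _ v between] by blast
    then have "frac_eq (fst (snd (farey_descend T (x # q)))) (c', d')" by simp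
    then show ?thesis by blast
  qed
qed

lemma farey_descend_root: "farey_descend farey_root p = farey_vertex p"
  by (simp add: farey_descend_def farey_vertex_def)

lemma farey_vertex_mid:
  assumes "fst (snd (farey_vertex p)) = (c, d)"
  shows "farey_mid p = of_nat c / of_nat d" "0 < d" "coprime c d"
proof -
  obtain a b e f where V: "farey_vertex p = ((a, b), (c, d), (e, f))"
    using assms by (metis prod.collapse)
  have v: "farey_triple ((a, b), (c, d), (e, f))" using farey_triple_farey_vertex[of p] V by simp
  then have "int c * int b - int a * int d = 1"
    unfolding farey_triple_def by (simp add: algebra_simps flip: of_nat_mult)
  then show "coprime c d" using coprime_of_det_eq_1(2) by (metis coprime_int_iff)
  show "0 < d" using farey_triple_pos[OF v] by simp
  show "farey_mid p = of_nat c / of_nat d" using assms by (simp add: farey_mid_def)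
qed

lemma farey_mid_inj: "farey_mid p = farey_mid p' \<Longrightarrow> p = p'"
proof -
  assume eq: "farey_mid p = farey_mid p'"
  obtain c d c' d' where V: "fst (snd (farey_vertex p)) = (c, d)" "fst (snd (farey_vertex p')) = (c', d')"
    by (metis prod.exhaust)
  have "(of_nat c / of_nat d :: rat) = of_nat c' / of_nat d'" "0 < d" "0 < d'"
    using eq farey_vertex_mid[OF V(1)] farey_vertex_mid[OF V(2)] by auto
  then have "of_nat (c * d') = (of_nat (c' * d) :: rat)" by (simp add: field_simps)
  then have "c * d' = c' * d" by (simp only: of_nat_eq_iff)
  then have "frac_eq (fst (snd (farey_descend farey_root p))) (fst (snd (farey_descend farey_root p')))"
    using V by (simp add: farey_descend_root)
  then show "p = p'"
    by (rule farey_descend_mid_inj[rotated]) (simp add: farey_triple_def farey_root_def)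
qed

lemma ex_farey_mid:
  assumes "0 < r"
  shows "\<exists>p. farey_mid p = r"
proof -
  obtain n m where nm: "quotient_of r = (n, m)" by (metis prod.exhaust)
  have m: "0 < m" and r: "r = of_int n / of_int m"
    using quotient_of_denom_pos[OF nm] quotient_of_div[OF nm] by auto
  then have n: "0 < n" using assms by (simp add: zero_less_divide_iff)
  have "farey_triple farey_root" "frac_less (fst farey_root) (nat n, nat m)"
    "frac_less (nat n, nat m) (snd (snd farey_root))"
    using n m by (simp_all add: farey_triple_def farey_root_def)
  then obtain p where "frac_eq (fst (snd (farey_vertex p))) (nat n, nat m)"
    using ex_farey_descend_mid[of farey_root "nat n" "nat m"] unfolding farey_descend_root by blast
  moreover obtain c d where V: "fst (snd (farey_vertex p)) = (c, d)" by (metis prod.exhaust)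
  ultimately have "int (c * nat m) = int (nat n * d)" by simp
  then have "int c * m = n * int d" using n m by simp
  then have "(of_int (int c * m) :: rat) = of_int (n * int d)" by (simp only:)
  then have "farey_mid p = r"
    unfolding farey_vertex_mid(1)[OF V] r using farey_vertex_mid(2)[OF V] m by (simp add: field_simps)
  then show ?thesis by blast
qed

lemma quotient_of_coprime_div:
  "0 < d \<Longrightarrow> coprime c d \<Longrightarrow> quotient_of (of_int c / of_int d) = (c, d)"
  unfolding quotient_of_def by (rule the1_equality[OF quotient_of_unique]) (simp add: Fract_of_int_quotient)

lemma omega_farey_mid:
  assumes V: "fst (snd (farey_vertex p)) = (c, d)" and c: "0 < c"
  shows "omega (Fin (farey_mid p)) = cut_word (int c) (int d)"
proof -
  note mid = farey_vertex_mid[OF V]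
  interpret lattice_line c d using mid c by unfold_locales auto
  have "quotient_of (farey_mid p) = (int c, int d)"
    using quotient_of_coprime_div[of "int d" "int c"] mid by simp
  then show ?thesis
    using mid c by (simp add: omega_def lattice_word_eq_cut_word)
qed

lemma Omega_farey_mid:
  assumes V: "fst (snd (farey_vertex p)) = (c, d)" and c: "0 < c"
  shows "fg_equiv (Omega (Fin (farey_mid p))) (cut_word (int c) (int d))"
proof -
  note mid = farey_vertex_mid[OF V]
  have "(THE p'. farey_mid p' = farey_mid p) = p"
    using farey_mid_inj by blast
  moreover have "fg_equiv (fst (snd (word_vertex p))) (farey_word c d)"
    using word_vertex_represents[of p] V by (auto simp: represents_farey_def split: prod.splits)
  ultimately show ?thesis
    using mid c by (simp add: Omega_def farey_word_def)
qed

theorem corollary3p7: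
  fixes t :: qinf
  assumes "nonneg_qinf t"
  shows "reduced (omega t) \<and> fg_equiv (omega t) (Omega t)"
proof (cases t)
  case Infty
  then show ?thesis by (simp add: omega_def Omega_def reduced_singleton fg_equiv.fg_refl)
next
  case (Fin r)
  consider "r = 0" | "0 < r" using assms Fin by (force simp: nonneg_qinf_def)
  then show ?thesis
  proof cases
    case 1
    then show ?thesis using Fin by (simp add: omega_def Omega_def reduced_singleton fg_equiv.fg_refl)
  next
    case 2
    obtain p where p: "farey_mid p = r" using ex_farey_mid[OF 2] by blast
    obtain c d where V: "fst (snd (farey_vertex p)) = (c, d)" by (metis prod.exhaust)
    have "0 < c" using 2 p farey_vertex_mid[OF V] by (auto intro: gr0I)
    then show ?thesis
      using Fin p omega_farey_mid[OF V] Omega_farey_mid[OF V] reduced_cut_word fg_equiv_sym by metis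
  qed
qed

end
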